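(* Let $G$ be a finite group and $A,B$ subgroups of $G$ with $G=AB$. (a) If $\gamma$ is a gamma function on $G$ with $B\le\ker(\gamma)$, then $\gamma(ab)=\gamma(a)$ for all $a\in A$, $b\in B$, so $\gamma(G)=\gamma(A)$. If moreover $A$ is $\gamma(A)$-invariant, then the restriction $\gamma'=\gamma|_A:A\to\mathrm{Aut}(G)$ is a relative gamma function on $A$, and $\ker(\gamma)$ is invariant under the subgroup $\{\gamma'(a)\iota(a):a\in A\}$ of $\mathrm{Aut}(G)$. (b) Conversely, let $\gamma':A\to\mathrm{Aut}(G)$ be a relative gamma function such that $\gamma'(x)=1$ for all $x\in A\cap B$ and $B$ is invariant under $\{\gamma'(a)\iota(a):a\in A\}$. Then $\gamma(ab)=\gamma'(a)$ ($a\in A$, $b\in B$) is a well-defined gamma function on $G$, and $\ker(\gamma)=\ker(\gamma')B$.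
   Context: Maps act on the right, written exponentially. $\iota(g)\in\mathrm{Aut}(G)$ is $x\mapsto g^{-1}xg$. For $A\le G$, a function $\gamma:A\to\mathrm{Aut}(G)$ is a relative gamma function (RGF) on $A$ if $\gamma(g^{\gamma(h)}h)=\gamma(g)\gamma(h)$ for all $g,h\in A$ and $A$ is $\gamma(A)$-invariant (i.e. $a^{\gamma(b)}\in A$ for all $a,b\in A$). A gamma function on $G$ is an RGF with $A=G$. $\ker(\gamma)=\{g:\gamma(g)=1\}$. *)

theory Defs
  imports "HOL-Algebra.Algebra"
begin

text \<open>Automorphisms are the elements of auto G (extensional on carrier G).
  Maps act on the right: x^(f g) = (x^f)^g, i.e. first f, then g.\<close>

definition aut_id :: "('a, 'b) monoid_scheme \<Rightarrow> 'a \<Rightarrow> 'a" where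
  "aut_id G = (\<lambda>x\<in>carrier G. x)"

definition aut_mult :: "('a, 'b) monoid_scheme \<Rightarrow> ('a \<Rightarrow> 'a) \<Rightarrow> ('a \<Rightarrow> 'a) \<Rightarrow> 'a \<Rightarrow> 'a" where
  "aut_mult G f g = (\<lambda>x\<in>carrier G. g (f x))"

definition iota :: "('a, 'b) monoid_scheme \<Rightarrow> 'a \<Rightarrow> 'a \<Rightarrow> 'a" where
  "iota G g = (\<lambda>x\<in>carrier G. inv\<^bsub>G\<^esub> g \<otimes>\<^bsub>G\<^esub> x \<otimes>\<^bsub>G\<^esub> g)"

definition rel_gamma :: "('a, 'b) monoid_scheme \<Rightarrow> 'a set \<Rightarrow> ('a \<Rightarrow> 'a \<Rightarrow> 'a) \<Rightarrow> bool" where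
  "rel_gamma G A \<gamma> \<longleftrightarrow> subgroup A G
     \<and> (\<forall>a\<in>A. \<gamma> a \<in> auto G)
     \<and> (\<forall>a\<in>A. \<forall>b\<in>A. \<gamma> b a \<in> A)
     \<and> (\<forall>g\<in>A. \<forall>h\<in>A. \<gamma> (\<gamma> h g \<otimes>\<^bsub>G\<^esub> h) = aut_mult G (\<gamma> g) (\<gamma> h))"

definition gamma_fun :: "('a, 'b) monoid_scheme \<Rightarrow> ('a \<Rightarrow> 'a \<Rightarrow> 'a) \<Rightarrow> bool" where
  "gamma_fun G \<gamma> \<longleftrightarrow> rel_gamma G (carrier G) \<gamma>"

definition gker :: "('a, 'b) monoid_scheme \<Rightarrow> 'a set \<Rightarrow> ('a \<Rightarrow> 'a \<Rightarrow> 'a) \<Rightarrow> 'a set" where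
  "gker G A \<gamma> = {g\<in>A. \<gamma> g = aut_id G}"

end

theory Submission
  imports Defs
begin

text \<open>Taking h in the kernel in the defining identity of a gamma function gives
  \<gamma>(gk) = \<gamma>(g) for every kernel element k, which yields (a) and also shows that
  \<gamma>' in (b) is constant on the cosets a(A \<inter> B), so that \<gamma> is well defined.
  The gamma identity for \<gamma> reduces to that of \<gamma>' through the factorisation
  (ab)^f a2 b2 = (a^f a2)(b^(f \<iota>(a2)) b2) with f = \<gamma>'(a2),
  whose second factor lies in B by the invariance hypothesis.\<close>

lemma auto_closed: "f \<in> auto G \<Longrightarrow> x \<in> carrier G \<Longrightarrow> f x \<in> carrier G"
  unfolding auto_def by (blast intro: hom_in_carrier)

lemma auto_mult:
  "f \<in> auto G \<Longrightarrow> x \<in> carrier G \<Longrightarrow> y \<in> carrier G \<Longrightarrow> f (x \<otimes>\<^bsub>G\<^esub> y) = f x \<otimes>\<^bsub>G\<^esub> f y"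
  by (simp add: auto_def hom_mult)

lemma auto_extensional: "f \<in> auto G \<Longrightarrow> f \<in> extensional (carrier G)"
  by (simp add: auto_def Bij_def)

lemma auto_bij_betw: "f \<in> auto G \<Longrightarrow> bij_betw f (carrier G) (carrier G)"
  by (simp add: auto_def Bij_def)

lemma aut_mult_aut_id_right: "f \<in> auto G \<Longrightarrow> aut_mult G f (aut_id G) = f"
  using auto_closed[of f G] auto_extensional[of f G]
  by (auto simp: aut_mult_def aut_id_def fun_eq_iff extensional_def)

lemma aut_mult_aut_id_left: "f \<in> auto G \<Longrightarrow> aut_mult G (aut_id G) f = f"
  using auto_extensional[of f G] by (auto simp: aut_mult_def aut_id_def fun_eq_iff extensional_def)

lemma aut_idempotent_eq_aut_id:
  assumes f: "f \<in> auto G" and idem: "aut_mult G f f = f"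
  shows "f = aut_id G"
proof
  fix x
  show "f x = aut_id G x"
  proof (cases "x \<in> carrier G")
    case True
    then have "f (f x) = f x"
      using idem by (metis aut_mult_def restrict_apply')
    then have "f x = x"
      using True auto_closed[OF f] auto_bij_betw[OF f] by (metis bij_betw_def inj_onD)
    then show ?thesis using True by (simp add: aut_id_def)
  next
    case False
    then show ?thesis using auto_extensional[OF f] by (simp add: aut_id_def extensional_def)
  qed
qed

lemma rel_gammaD:
  assumes "rel_gamma G A \<gamma>"
  shows "subgroup A G"
    and "a \<in> A \<Longrightarrow> \<gamma> a \<in> auto G"
    and "a \<in> A \<Longrightarrow> b \<in> A \<Longrightarrow> \<gamma> b a \<in> A"
    and "g \<in> A \<Longrightarrow> h \<in> A \<Longrightarrow> \<gamma> (\<gamma> h g \<otimes>\<^bsub>G\<^esub> h) = aut_mult G (\<gamma> g) (\<gamma> h)"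
  using assms by (auto simp: rel_gamma_def)

lemma rel_gamma_one:
  fixes G (structure)
  assumes G: "group G" and \<gamma>: "rel_gamma G A \<gamma>"
  shows "\<gamma> \<one>\<^bsub>G\<^esub> = aut_id G"
proof -
  interpret group G by (rule G)
  have one: "\<one> \<in> A" using subgroup.one_closed[OF rel_gammaD(1)[OF \<gamma>]] .
  then have aut: "\<gamma> \<one> \<in> auto G" by (rule rel_gammaD(2)[OF \<gamma>])
  have "\<gamma> \<one> \<one> = \<one>" using aut hom_one[OF _ G G] by (simp add: auto_def)
  then have "aut_mult G (\<gamma> \<one>) (\<gamma> \<one>) = \<gamma> \<one>"
    using rel_gammaD(4)[OF \<gamma> one one] by simp
  then show ?thesis using aut_idempotent_eq_aut_id[OF aut] by simp
qed

lemma rel_gamma_mult_gker: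
  assumes \<gamma>: "rel_gamma G A \<gamma>" and g: "g \<in> A" and k: "k \<in> gker G A \<gamma>"
  shows "\<gamma> (g \<otimes>\<^bsub>G\<^esub> k) = \<gamma> g"
proof -
  have kA: "k \<in> A" and \<gamma>k: "\<gamma> k = aut_id G" using k by (auto simp: gker_def)
  have "g \<in> carrier G" using g subgroup.subset[OF rel_gammaD(1)[OF \<gamma>]] by blast
  then have "\<gamma> k g = g" using \<gamma>k by (simp add: aut_id_def)
  then have "\<gamma> (g \<otimes>\<^bsub>G\<^esub> k) = aut_mult G (\<gamma> g) (aut_id G)"
    using rel_gammaD(4)[OF \<gamma> g kA] \<gamma>k by simp
  then show ?thesis using aut_mult_aut_id_right[OF rel_gammaD(2)[OF \<gamma> g]] by simp
qed

lemma gamma_fun_gker_conj_closed: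
  fixes G (structure)
  assumes G: "group G" and \<gamma>: "gamma_fun G \<gamma>" and a: "a \<in> carrier G"
    and k: "k \<in> gker G (carrier G) \<gamma>"
  shows "aut_mult G (\<gamma> a) (iota G a) k \<in> gker G (carrier G) \<gamma>"
proof -
  interpret group G by (rule G)
  have rg: "rel_gamma G (carrier G) \<gamma>" using \<gamma> by (simp add: gamma_fun_def)
  note \<gamma>_aut = rel_gammaD(2)[OF rg] and \<gamma>_eq = rel_gammaD(4)[OF rg]
  have kc: "k \<in> carrier G" and \<gamma>k: "\<gamma> k = aut_id G" using k by (auto simp: gker_def)
  have \<gamma>a: "\<gamma> a \<in> auto G" using \<gamma>_aut[OF a] .
  \<comment> \<open>Since \<gamma>(1) = 1, an x with x^\<gamma>(a) = a\<inverse> makes \<gamma>(x) the inverse of \<gamma>(a).\<close>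
  obtain x where x: "x \<in> carrier G" "\<gamma> a x = inv a"
    using bij_betw_imp_surj_on[OF auto_bij_betw[OF \<gamma>a]] a by (metis imageE inv_closed)
  have \<gamma>x_\<gamma>a: "aut_mult G (\<gamma> x) (\<gamma> a) = aut_id G"
    using \<gamma>_eq[OF x(1) a] x a rel_gamma_one[OF G rg] by simp
  define ka where "ka = \<gamma> a k \<otimes> a"
  have ka: "ka \<in> carrier G" using ka_def auto_closed[OF \<gamma>a] kc a by simp
  have \<gamma>ka: "\<gamma> ka = \<gamma> a"
    using \<gamma>_eq[OF kc a] \<gamma>k aut_mult_aut_id_left[OF \<gamma>a] ka_def by simp
  have "\<gamma> (inv a \<otimes> ka) = aut_id G"
    using \<gamma>_eq[OF x(1) ka] \<gamma>ka x \<gamma>x_\<gamma>a by simp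
  moreover have "aut_mult G (\<gamma> a) (iota G a) k = inv a \<otimes> ka"
    using kc a auto_closed[OF \<gamma>a] by (simp add: aut_mult_def iota_def ka_def m_assoc)
  ultimately show ?thesis using ka a by (simp add: gker_def)
qed

lemma gamma_fun_restrict_rel_gamma:
  assumes "gamma_fun G \<gamma>" and "subgroup A G" and "\<forall>a\<in>A. \<forall>b\<in>A. \<gamma> b a \<in> A"
  shows "rel_gamma G A \<gamma>"
  using assms subgroup.subset[OF assms(2)] unfolding gamma_fun_def rel_gamma_def by blast

lemma image_set_mult_eq:
  assumes eq: "\<forall>a\<in>A. \<forall>b\<in>B. f (a \<otimes>\<^bsub>G\<^esub> b) = f a" and b: "b \<in> B"
  shows "f ` (A <#>\<^bsub>G\<^esub> B) = f ` A"
proof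
  show "f ` (A <#>\<^bsub>G\<^esub> B) \<subseteq> f ` A" using eq unfolding set_mult_def by auto
  show "f ` A \<subseteq> f ` (A <#>\<^bsub>G\<^esub> B)"
  proof
    fix y assume "y \<in> f ` A"
    then obtain a where "a \<in> A" "y = f (a \<otimes>\<^bsub>G\<^esub> b)" using eq b by auto
    then show "y \<in> f ` (A <#>\<^bsub>G\<^esub> B)" using b unfolding set_mult_def by blast
  qed
qed

definition gamma_ext :: "('a, 'b) monoid_scheme \<Rightarrow> 'a set \<Rightarrow> 'a set \<Rightarrow> ('a \<Rightarrow> 'a \<Rightarrow> 'a) \<Rightarrow> 'a \<Rightarrow> 'a \<Rightarrow> 'a"
  where "gamma_ext G A B \<gamma>' g = \<gamma>' (SOME a. a \<in> A \<and> (\<exists>b\<in>B. g = a \<otimes>\<^bsub>G\<^esub> b))"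

lemma rel_gamma_eq_if_same_coset:
  fixes G (structure)
  assumes G: "group G" and \<gamma>': "rel_gamma G A \<gamma>'" and B: "subgroup B G"
    and triv: "\<forall>x\<in>A \<inter> B. \<gamma>' x = aut_id G"
    and a: "a \<in> A" "a' \<in> A" and b: "b \<in> B" "b' \<in> B" and eq: "a \<otimes> b = a' \<otimes> b'"
  shows "\<gamma>' a = \<gamma>' a'"
proof -
  interpret group G by (rule G)
  note A = rel_gammaD(1)[OF \<gamma>']
  have c: "a \<in> carrier G" "a' \<in> carrier G" "b \<in> carrier G" "b' \<in> carrier G"
    using a b subgroup.subset[OF A] subgroup.subset[OF B] by auto
  define x where "x = inv a' \<otimes> a"
  have "x = inv a' \<otimes> (a \<otimes> b) \<otimes> inv b" using c unfolding x_def by (simp add: m_assoc)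
  also have "\<dots> = b' \<otimes> inv b" using eq c by (simp add: m_assoc[symmetric])
  finally have "x = b' \<otimes> inv b" .
  then have "x \<in> B" using b B by (simp add: subgroup.m_closed subgroup.m_inv_closed)
  moreover have "x \<in> A" using a A x_def by (simp add: subgroup.m_closed subgroup.m_inv_closed)
  ultimately have "x \<in> A \<inter> B" by blast
  then have "x \<in> gker G A \<gamma>'" using triv by (simp add: gker_def)
  moreover have "a = a' \<otimes> x" using c unfolding x_def by (simp add: m_assoc[symmetric])
  ultimately show ?thesis using rel_gamma_mult_gker[OF \<gamma>' a(2)] by simp
qed

lemma gamma_ext_mult:
  fixes G (structure)
  assumes "group G" "rel_gamma G A \<gamma>'" "subgroup B G" "\<forall>x\<in>A \<inter> B. \<gamma>' x = aut_id G"
    and a: "a \<in> A" and b: "b \<in> B"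
  shows "gamma_ext G A B \<gamma>' (a \<otimes> b) = \<gamma>' a"
proof -
  define a' where "a' = (SOME a'. a' \<in> A \<and> (\<exists>b'\<in>B. a \<otimes> b = a' \<otimes> b'))"
  have "\<exists>a'. a' \<in> A \<and> (\<exists>b'\<in>B. a \<otimes> b = a' \<otimes> b')" using a b by blast
  then have "a' \<in> A \<and> (\<exists>b'\<in>B. a \<otimes> b = a' \<otimes> b')"
    unfolding a'_def by (rule someI_ex)
  then obtain b' where "a' \<in> A" "b' \<in> B" "a \<otimes> b = a' \<otimes> b'" by blast
  then have "\<gamma>' a = \<gamma>' a'" using rel_gamma_eq_if_same_coset[OF assms(1-4) a _ b] by blast
  then show ?thesis by (simp add: gamma_ext_def a'_def)
qed

lemma auto_mult_factor_conj:
  fixes G (structure)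
  assumes "group G" "f \<in> auto G"
    and "a \<in> carrier G" "b \<in> carrier G" "a\<^sub>2 \<in> carrier G" "b\<^sub>2 \<in> carrier G"
  shows "f (a \<otimes> b) \<otimes> (a\<^sub>2 \<otimes> b\<^sub>2) = (f a \<otimes> a\<^sub>2) \<otimes> (aut_mult G f (iota G a\<^sub>2) b \<otimes> b\<^sub>2)"
proof -
  interpret group G by (rule assms(1))
  have "f a \<in> carrier G" "f b \<in> carrier G" using assms auto_closed by auto
  then show ?thesis
    using assms auto_mult[OF assms(2)]
    by (simp add: aut_mult_def iota_def m_assoc r_inv_ex m_assoc[symmetric, of a\<^sub>2 "inv a\<^sub>2"])
qed

lemma gamma_fun_gamma_ext:
  fixes G (structure)
  assumes G: "group G" and \<gamma>': "rel_gamma G A \<gamma>'" and B: "subgroup B G"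
    and triv: "\<forall>x\<in>A \<inter> B. \<gamma>' x = aut_id G"
    and AB: "carrier G = A <#> B"
    and B_inv: "\<forall>a\<in>A. \<forall>b\<in>B. aut_mult G (\<gamma>' a) (iota G a) b \<in> B"
  shows "gamma_fun G (gamma_ext G A B \<gamma>')"
proof -
  interpret group G by (rule G)
  let ?\<gamma> = "gamma_ext G A B \<gamma>'"
  note ext = gamma_ext_mult[OF G \<gamma>' B triv]
  note A = rel_gammaD(1)[OF \<gamma>']
  have c: "a \<in> carrier G" "b \<in> carrier G" if "a \<in> A" "b \<in> B" for a b
    using that subgroup.subset[OF A] subgroup.subset[OF B] by auto
  have factor: "\<exists>a\<in>A. \<exists>b\<in>B. g = a \<otimes> b" if "g \<in> carrier G" for g
    using that AB unfolding set_mult_def by blast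
  show ?thesis unfolding gamma_fun_def rel_gamma_def
  proof (intro conjI ballI)
    show "subgroup (carrier G) G" by (rule subgroup_self)
    fix g assume "g \<in> carrier G"
    then obtain a b where ab: "a \<in> A" "b \<in> B" "g = a \<otimes> b" using factor by blast
    then show \<gamma>g: "?\<gamma> g \<in> auto G" using ext rel_gammaD(2)[OF \<gamma>'] by simp
    fix h assume h: "h \<in> carrier G"
    then obtain a\<^sub>2 b\<^sub>2 where ab\<^sub>2: "a\<^sub>2 \<in> A" "b\<^sub>2 \<in> B" "h = a\<^sub>2 \<otimes> b\<^sub>2" using factor by blast
    show "?\<gamma> g h \<in> carrier G" using auto_closed[OF \<gamma>g h] .
    have "?\<gamma> h g \<otimes> h = (\<gamma>' a\<^sub>2 a \<otimes> a\<^sub>2) \<otimes> (aut_mult G (\<gamma>' a\<^sub>2) (iota G a\<^sub>2) b \<otimes> b\<^sub>2)"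
      using ab ab\<^sub>2 ext auto_mult_factor_conj[OF G rel_gammaD(2)[OF \<gamma>' ab\<^sub>2(1)]] c by simp
    moreover have "\<gamma>' a\<^sub>2 a \<otimes> a\<^sub>2 \<in> A"
      using ab ab\<^sub>2 rel_gammaD(3)[OF \<gamma>'] A by (simp add: subgroup.m_closed)
    moreover have "aut_mult G (\<gamma>' a\<^sub>2) (iota G a\<^sub>2) b \<otimes> b\<^sub>2 \<in> B"
      using ab ab\<^sub>2 B_inv B by (simp add: subgroup.m_closed)
    ultimately have "?\<gamma> (?\<gamma> h g \<otimes> h) = \<gamma>' (\<gamma>' a\<^sub>2 a \<otimes> a\<^sub>2)" using ext by simp
    also have "\<dots> = aut_mult G (\<gamma>' a) (\<gamma>' a\<^sub>2)" using rel_gammaD(4)[OF \<gamma>' ab(1) ab\<^sub>2(1)] .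
    finally show "?\<gamma> (?\<gamma> h g \<otimes> h) = aut_mult G (?\<gamma> g) (?\<gamma> h)"
      using ab ab\<^sub>2 ext by simp
  qed
qed

lemma gker_gamma_ext:
  fixes G (structure)
  assumes G: "group G" and \<gamma>': "rel_gamma G A \<gamma>'" and B: "subgroup B G"
    and triv: "\<forall>x\<in>A \<inter> B. \<gamma>' x = aut_id G"
    and AB: "carrier G = A <#> B"
  shows "gker G (carrier G) (gamma_ext G A B \<gamma>') = gker G A \<gamma>' <#> B"
  using gamma_ext_mult[OF G \<gamma>' B triv] AB
  unfolding gker_def set_mult_def by auto

theorem mainTheorem8:
  fixes G (structure) and A B :: "'a set"
    and \<gamma> \<gamma>' :: "'a \<Rightarrow> 'a \<Rightarrow> 'a"
  assumes "group G" and "finite (carrier G)"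
    and "subgroup A G" and "subgroup B G"
    and "carrier G = A <#> B"
  shows
   "(gamma_fun G \<gamma> \<and> B \<subseteq> gker G (carrier G) \<gamma> \<longrightarrow>
       (\<forall>a\<in>A. \<forall>b\<in>B. \<gamma> (a \<otimes> b) = \<gamma> a)
     \<and> \<gamma> ` carrier G = \<gamma> ` A
     \<and> ((\<forall>a\<in>A. \<forall>b\<in>A. \<gamma> b a \<in> A) \<longrightarrow>
          rel_gamma G A \<gamma>
        \<and> (\<forall>a\<in>A. \<forall>k\<in>gker G (carrier G) \<gamma>.
              aut_mult G (\<gamma> a) (iota G a) k \<in> gker G (carrier G) \<gamma>)))
  \<and> (rel_gamma G A \<gamma>' \<and> (\<forall>x\<in>A \<inter> B. \<gamma>' x = aut_id G)
      \<and> (\<forall>a\<in>A. \<forall>b\<in>B. aut_mult G (\<gamma>' a) (iota G a) b \<in> B) \<longrightarrow>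
      (\<exists>\<gamma>. gamma_fun G \<gamma>
          \<and> (\<forall>a\<in>A. \<forall>b\<in>B. \<gamma> (a \<otimes> b) = \<gamma>' a)
          \<and> gker G (carrier G) \<gamma> = gker G A \<gamma>' <#> B))"
  (is "?part_a \<and> ?part_b")
proof
  note G = assms(1) and A = assms(3) and B = assms(4) and AB = assms(5)
  have Ac: "A \<subseteq> carrier G" using subgroup.subset[OF A] .
  show ?part_a
  proof (rule impI, intro conjI)
    assume \<gamma>: "gamma_fun G \<gamma> \<and> B \<subseteq> gker G (carrier G) \<gamma>"
    then show AB_eq: "\<forall>a\<in>A. \<forall>b\<in>B. \<gamma> (a \<otimes> b) = \<gamma> a"
      using rel_gamma_mult_gker[of G "carrier G" \<gamma>] Ac by (auto simp: gamma_fun_def)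
    show "\<gamma> ` carrier G = \<gamma> ` A"
      using image_set_mult_eq[OF AB_eq] subgroup.one_closed[OF B] AB by auto
    show "(\<forall>a\<in>A. \<forall>b\<in>A. \<gamma> b a \<in> A) \<longrightarrow> rel_gamma G A \<gamma> \<and>
        (\<forall>a\<in>A. \<forall>k\<in>gker G (carrier G) \<gamma>. aut_mult G (\<gamma> a) (iota G a) k \<in> gker G (carrier G) \<gamma>)"
      using \<gamma> gamma_fun_restrict_rel_gamma[OF _ A] gamma_fun_gker_conj_closed[OF G] Ac by blast
  qed
  show ?part_b
    using gamma_fun_gamma_ext[OF G _ B _ AB] gamma_ext_mult[OF G _ B] gker_gamma_ext[OF G _ B _ AB]
    by blast
qed

end
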